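(* Let $n$ be an even positive integer, $\ell\ge 2$, and let $G$ be an $N$-AW graph on $n$ vertices with $|E(\overline{G})|=\frac{n}{2}+t$, where $t\ge 1$. Then the maximum degree of $\overline{G}$ is at most $t+1$.
   Context: All graphs are finite and simple; $\overline{G}$ is the complement. Labels lie in $\mathbb{Z}_\ell$. In the neighborhood Lights Out game, toggling a vertex $w$ adds $1$ (mod $\ell$) to the label of each vertex of the closed neighborhood $N[w]$; the game is won when all labels are $0$; a graph is $N$-AW if every initial labeling can be won. *)

theory Defs
  imports Main
begin

definition simple_graph :: "'a set \<Rightarrow> ('a \<Rightarrow> 'a \<Rightarrow> bool) \<Rightarrow> bool" where
  "simple_graph V E \<longleftrightarrow> finite V \<and> (\<forall>u v. E u v \<longrightarrow> u \<in> V \<and> v \<in> V)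
     \<and> (\<forall>u v. E u v \<longrightarrow> E v u) \<and> (\<forall>v. \<not> E v v)"

definition closed_nbhd :: "'a set \<Rightarrow> ('a \<Rightarrow> 'a \<Rightarrow> bool) \<Rightarrow> 'a \<Rightarrow> 'a set" where
  "closed_nbhd V E w = {v \<in> V. v = w \<or> E w v}"

text \<open>N-AW over Z_l: every labeling V -> {0..<l} can be brought to all zeros by toggling;
  x w is the number of times vertex w is toggled.  Vertex v receives +1 from each toggle of
  a vertex w with v in N[w], equivalently w in N[v].\<close>
definition N_AW :: "nat \<Rightarrow> 'a set \<Rightarrow> ('a \<Rightarrow> 'a \<Rightarrow> bool) \<Rightarrow> bool" where
  "N_AW l V E \<longleftrightarrow> (\<forall>f :: 'a \<Rightarrow> int. (\<forall>v\<in>V. 0 \<le> f v \<and> f v < int l) \<longrightarrow>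
     (\<exists>x :: 'a \<Rightarrow> nat. \<forall>v\<in>V. (f v + (\<Sum>w\<in>closed_nbhd V E v. int (x w))) mod int l = 0))"

definition compl_edges :: "'a set \<Rightarrow> ('a \<Rightarrow> 'a \<Rightarrow> bool) \<Rightarrow> 'a set set" where
  "compl_edges V E = {{u, v} | u v. u \<in> V \<and> v \<in> V \<and> u \<noteq> v \<and> \<not> E u v}"

definition compl_degree :: "'a set \<Rightarrow> ('a \<Rightarrow> 'a \<Rightarrow> bool) \<Rightarrow> 'a \<Rightarrow> nat" where
  "compl_degree V E v = card {u \<in> V. u \<noteq> v \<and> \<not> E v u}"

end

theory Submission
  imports Defs
begin

text \<open>In an N-AW graph no two vertices have the same closed neighbourhood: toggling
  affects such twins identically, so the labeling with a single 1 at one of them cannot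
  be won. Hence, for a fixed vertex v, at most one vertex is adjacent to all others and at
  most one vertex has v as its only non-neighbour. Every other vertex u \<noteq> v has
  complement degree at least 1, and at least 2 if u is not adjacent to v. Summing over
  u \<noteq> v gives n - 1 + deg v - 2 \<le> 2|E(complement)| - deg v = n + 2t - deg v,
  i.e. deg v \<le> t + 1.\<close>

lemma N_AW_inj_on_closed_nbhd:
  assumes "N_AW l V E" and "l \<ge> 2"
  shows "inj_on (closed_nbhd V E) V"
proof
  fix a b assume ab: "a \<in> V" "b \<in> V" and same: "closed_nbhd V E a = closed_nbhd V E b"
  show "a = b"
  proof (rule ccontr)
    assume "a \<noteq> b"
    define f :: "'a \<Rightarrow> int" where "f = (\<lambda>v. if v = a then 1 else 0)"
    have "\<forall>v\<in>V. 0 \<le> f v \<and> f v < int l" using assms(2) by (auto simp: f_def)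
    then obtain x :: "'a \<Rightarrow> nat"
      where x: "\<forall>v\<in>V. (f v + (\<Sum>w\<in>closed_nbhd V E v. int (x w))) mod int l = 0"
      using assms(1) unfolding N_AW_def by blast
    define S where "S = (\<Sum>w\<in>closed_nbhd V E a. int (x w))"
    have "(1 + S) mod int l = 0" using x ab by (auto simp: f_def S_def)
    moreover have "S mod int l = 0" using x ab \<open>a \<noteq> b\<close> same by (auto simp: f_def S_def)
    ultimately have "1 mod int l = 0" by (metis add.right_neutral mod_add_right_eq)
    then show False using assms(2) by simp
  qed
qed

lemma sum_compl_degree:
  assumes "simple_graph V E"
  shows "(\<Sum>u\<in>V. compl_degree V E u) = 2 * card (compl_edges V E)"
proof -
  have fin: "finite V" using assms by (simp add: simple_graph_def)
  have sym: "\<And>u w. E u w = E w u" using assms unfolding simple_graph_def by blast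
  define D where "D = Sigma V (\<lambda>u. {w\<in>V. w \<noteq> u \<and> \<not> E u w})"
  define g where "g = (\<lambda>p::'a \<times> 'a. {fst p, snd p})"
  have "finite D" using fin unfolding D_def by auto
  have card_D: "card D = (\<Sum>u\<in>V. compl_degree V E u)"
    unfolding D_def compl_degree_def using fin by (subst card_SigmaI) (auto simp: eq_commute)
  have image_D: "g ` D = compl_edges V E"
    unfolding D_def g_def compl_edges_def by (fastforce intro: rev_image_eqI)
  have fibre: "card {p \<in> D. g p = e} = 2" if e: "e \<in> compl_edges V E" for e
  proof -
    obtain a b where ab: "e = {a, b}" "a \<in> V" "b \<in> V" "a \<noteq> b" "\<not> E a b"
      using e unfolding compl_edges_def by blast
    then have "{p \<in> D. g p = e} = {(a, b), (b, a)}"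
      using sym unfolding D_def g_def by (auto simp: doubleton_eq_iff)
    then show ?thesis using ab by simp
  qed
  have "card D = (\<Sum>e\<in>g ` D. card {p \<in> D. g p = e})"
    using sum.image_gen[OF \<open>finite D\<close>, of "\<lambda>_. 1::nat" g] by simp
  also have "\<dots> = 2 * card (compl_edges V E)" using image_D fibre by simp
  finally show ?thesis using card_D by simp
qed

lemma closed_nbhd_eq_Diff_non_neighbours:
  assumes "simple_graph V E" and "u \<in> V"
  shows "closed_nbhd V E u = V - {w \<in> V. w \<noteq> u \<and> \<not> E u w}"
  using assms unfolding closed_nbhd_def by auto

lemma closed_nbhd_if_compl_degree_small:
  assumes "simple_graph V E" and "v \<in> V" and "u \<in> V" and "u \<noteq> v"
    and "compl_degree V E u < 1 + of_bool (\<not> E v u)"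
  shows "closed_nbhd V E u \<in> {V, V - {v}}"
proof -
  let ?M = "{w \<in> V. w \<noteq> u \<and> \<not> E u w}"
  have "finite ?M" using assms(1) by (simp add: simple_graph_def)
  consider "card ?M = 0" | "card ?M = 1" "\<not> E v u"
    using assms(5) unfolding compl_degree_def by (cases "E v u") (auto simp: less_Suc_eq)
  then have "?M = {} \<or> ?M = {v}"
  proof cases
    case 2
    then obtain z where "?M = {z}" using card_1_singletonE by blast
    moreover have "v \<in> ?M" using 2 assms(1-4) unfolding simple_graph_def by auto
    ultimately show ?thesis by simp
  qed (use \<open>finite ?M\<close> in simp)
  then show ?thesis
    using closed_nbhd_eq_Diff_non_neighbours[OF assms(1,3)] by auto
qed

lemma one_le_compl_degree_if_not_adjacent:
  assumes "simple_graph V E" and "u \<in> V" and "v \<in> V" and "u \<noteq> v" and "\<not> E v u"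
  shows "1 \<le> compl_degree V E u"
proof -
  have "v \<in> {w \<in> V. w \<noteq> u \<and> \<not> E u w}"
    using assms unfolding simple_graph_def by auto
  then show ?thesis
    using assms(1) by (auto simp: simple_graph_def compl_degree_def Suc_le_eq card_gt_0_iff)
qed

lemma N_AW_card_small_compl_degree_le_2:
  assumes "simple_graph V E" and "N_AW l V E" and "l \<ge> 2" and "v \<in> V"
  shows "card {u \<in> V - {v}. compl_degree V E u < 1 + of_bool (\<not> E v u)} \<le> 2"
    (is "card ?B \<le> 2")
proof -
  have "inj_on (closed_nbhd V E) ?B"
    using N_AW_inj_on_closed_nbhd[OF assms(2,3)] by (rule inj_on_subset) auto
  moreover have "closed_nbhd V E ` ?B \<subseteq> {V, V - {v}}"
    using closed_nbhd_if_compl_degree_small[OF assms(1,4)] by blast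
  ultimately have "card ?B \<le> card {V, V - {v}}" by (rule card_inj_on_le) simp
  also have "\<dots> \<le> 2" by (simp add: card_insert_le_m1)
  finally show ?thesis .
qed

lemma N_AW_compl_degree_sum_lower_bound:
  assumes "simple_graph V E" and "N_AW l V E" and "l \<ge> 2" and "v \<in> V"
  shows "card V + 2 * compl_degree V E v \<le> (\<Sum>u\<in>V. compl_degree V E u) + 3"
proof -
  let ?cd = "compl_degree V E"
  define W where "W = V - {v}"
  define B where "B = {u \<in> W. ?cd u < 1 + of_bool (\<not> E v u)}"
  have "finite V" using assms(1) by (simp add: simple_graph_def)
  then have "finite W" by (simp add: W_def)
  have "(\<Sum>u\<in>W. 1 + of_bool (\<not> E v u)) \<le> (\<Sum>u\<in>W. ?cd u + of_bool (u \<in> B))"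
  proof (rule sum_mono)
    fix u assume "u \<in> W"
    then show "1 + of_bool (\<not> E v u) \<le> ?cd u + of_bool (u \<in> B)"
      using one_le_compl_degree_if_not_adjacent[OF assms(1) _ assms(4), of u]
      by (cases "E v u") (auto simp: B_def W_def)
  qed
  also have "\<dots> = (\<Sum>u\<in>W. ?cd u) + card B"
    using \<open>finite W\<close> by (simp add: sum.distrib B_def Int_def)
  finally have "card W + card {u \<in> W. \<not> E v u} \<le> (\<Sum>u\<in>W. ?cd u) + card B"
    using \<open>finite W\<close> by (simp add: sum_Suc Int_def)
  moreover have "card B \<le> 2"
    using N_AW_card_small_compl_degree_le_2[OF assms] by (simp add: B_def W_def)
  moreover have "card {u \<in> W. \<not> E v u} = ?cd v"
    unfolding compl_degree_def W_def by (rule arg_cong[where f = card]) auto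
  moreover have "card W + 1 = card V"
    unfolding W_def using card_Suc_Diff1[OF \<open>finite V\<close> assms(4)] by simp
  moreover have "(\<Sum>u\<in>V. ?cd u) = ?cd v + (\<Sum>u\<in>W. ?cd u)"
    using \<open>finite V\<close> assms(4) by (simp add: W_def sum.remove)
  ultimately show ?thesis by linarith
qed

theorem lemma4p11:
  fixes V :: "'a set" and E :: "'a \<Rightarrow> 'a \<Rightarrow> bool" and n l t :: nat
  assumes "simple_graph V E"
    and "card V = n" and "even n" and "n > 0"
    and "l \<ge> 2"
    and "N_AW l V E"
    and "card (compl_edges V E) = n div 2 + t" and "t \<ge> 1"
  shows "\<forall>v\<in>V. compl_degree V E v \<le> t + 1"
proof
  fix v assume "v \<in> V"
  have "(\<Sum>u\<in>V. compl_degree V E u) = n + 2 * t"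
    using sum_compl_degree[OF assms(1)] assms(3,7) by simp
  then show "compl_degree V E v \<le> t + 1"
    using N_AW_compl_degree_sum_lower_bound[OF assms(1,6,5) \<open>v \<in> V\<close>] assms(2) by linarith
qed

end
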